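(* Let $p$ be a prime, let $G$ be a cyclic group of order $p$, and let $S$ be an unsplittable minimal zero-sum sequence over $G$. Let $g\in G$, let $x\in[2,p-1]$ be an integer and $k\ge 3$ an integer, and suppose $T=g^k(xg)^2$ is a subsequence of $S$. Then $|\Sigma(T)|\ge 2|T|$. Moreover, unless $T=g^k\big(\frac{p+3}{2}g\big)^2$, one has $|\Sigma(T)|\ge 2|T|+1$.
   Context: A sequence over $G$ is a finite unordered list of elements of $G$ with repetition allowed, written multiplicatively; $g^k$ denotes $k$ copies of $g$, $xg$ is the $x$-fold multiple of $g$, $|T|$ is the length, $\sigma(T)$ the sum of terms, and $\operatorname{supp}(T)$ the set of elements occurring. $T$ is a subsequence of $S$ if each element occurs in $T$ at most as often as in $S$. $\Sigma(T)$ is the set of sums $\sigma(U)$ over all subsequences $U$ of $T$ with $|U|\ge 1$. $S$ is a minimal zero-sum sequence if $\sigma(S)=0$ and no subsequence $U$ with $1\le|U|<|S|$ has $\sigma(U)=0$. A minimal zero-sum sequence $S$ is unsplittable if there do not exist $h\in\operatorname{supp}(S)$ and $y,z\in G$ with $y+z=h$ such that the sequence obtained from $S$ by replacing one copy of $h$ with the two terms $y,z$ is again a minimal zero-sum sequence. *)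

theory Defs
  imports Main "HOL-Library.Multiset" "HOL-Computational_Algebra.Primes"
begin

text \<open>The cyclic group of order p is modelled as Z/pZ, with elements the
  integers 0..p-1 and addition modulo p. A sequence over G is a multiset of
  such integers.\<close>

definition grp :: "int \<Rightarrow> int set" where
  "grp p = {0..<p}"

definition seq_over :: "int \<Rightarrow> int multiset \<Rightarrow> bool" where
  "seq_over p S \<longleftrightarrow> set_mset S \<subseteq> grp p"

definition sigma :: "int \<Rightarrow> int multiset \<Rightarrow> int" where
  "sigma p T = (\<Sum>\<^sub># T) mod p"

definition Sigma_set :: "int \<Rightarrow> int multiset \<Rightarrow> int set" where
  "Sigma_set p T = {sigma p U | U. U \<subseteq># T \<and> U \<noteq> {#}}"

definition min_zero_sum :: "int \<Rightarrow> int multiset \<Rightarrow> bool" where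
  "min_zero_sum p S \<longleftrightarrow> seq_over p S \<and> S \<noteq> {#} \<and> sigma p S = 0 \<and>
     (\<forall>U. U \<subseteq># S \<and> 1 \<le> size U \<and> size U < size S \<longrightarrow> sigma p U \<noteq> 0)"

definition unsplittable :: "int \<Rightarrow> int multiset \<Rightarrow> bool" where
  "unsplittable p S \<longleftrightarrow> min_zero_sum p S \<and>
     \<not> (\<exists>h \<in> set_mset S. \<exists>y \<in> grp p. \<exists>z \<in> grp p. (y + z) mod p = h \<and>
          min_zero_sum p (S - {#h#} + {#y, z#}))"

end

theory Submission
  imports Defs
begin

text \<open>Unsplittability means that for every term h of S the subsums of S h^-1, together with 0,
  cover the group: a missed value c would let h be split as y + z with y = -c. Minimality means
  that g^a (xg)^b R, with R a subsequence of S T^-1, has sum 0 only if it is all of S.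
  Applying the covering property at h = xg and at h = g rules out x \<le> k and 2x = 1 (mod p).
  It follows that the residues a + bx mod p are pairwise distinct for 1 \<le> a \<le> k if b = 0,
  for 0 \<le> a \<le> k if b = 1, and for k - m \<le> a \<le> k if b = 2, where m = 3 unless
  2x = 3 (mod p), i.e. x = (p + 3)/2, in which case m = 2. Multiplied by g they are 2k + 2 + m distinct elements of \<Sigma>(T).\<close>

lemma subseteq_mset_plus_split:
  assumes "U \<subseteq># A + B"
  obtains U1 U2 where "U = U1 + U2" "U1 \<subseteq># A" "U2 \<subseteq># B"
proof
  show "U = U \<inter># A + (U - A)" by (simp add: multiset_eq_iff min_def)
  show "U \<inter># A \<subseteq># A" by simp
  show "U - A \<subseteq># B" using assms by (simp add: subset_eq_diff_conv add.commute)
qed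

lemma subseteq_mset_pair_cases:
  assumes "R \<subseteq># {#y, z#}"
  shows "R = {#} \<or> R = {#y#} \<or> R = {#z#} \<or> R = {#y, z#}"
proof -
  have single: "Q = {#} \<or> Q = {#z#}" if "Q \<subseteq># {#z#}" for Q
    using nonempty_subseteq_mset_eq_single[OF _ that] by blast
  show ?thesis
  proof (cases "y \<in># R")
    case True
    then obtain R' where R: "R = add_mset y R'" by (meson multi_member_split)
    with assms have "R' \<subseteq># {#z#}" by (simp add: insert_subset_eq_iff)
    then show ?thesis using R single by blast
  next
    case False
    have "count R c \<le> count {#z#} c" for c
      using False mset_subset_eq_count[OF assms, of c] by (cases "c = y") (auto simp: not_in_iff)
    then show ?thesis using single subseteq_mset_def by metis
  qed
qed

lemma subseteq_replicate_mset_plus_replicate_mset: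
  assumes "U \<subseteq># replicate_mset i g + replicate_mset j h" "g \<noteq> h"
  obtains a b where "U = replicate_mset a g + replicate_mset b h" "a \<le> i" "b \<le> j"
proof
  have count_le: "count U c \<le> count (replicate_mset i g + replicate_mset j h) c" for c
    using assms(1) by (simp add: subseteq_mset_def)
  show "count U g \<le> i" "count U h \<le> j"
    using count_le[of g] count_le[of h] assms(2) by auto
  show "U = replicate_mset (count U g) g + replicate_mset (count U h) h"
  proof (rule multiset_eqI)
    fix c
    show "count U c = count (replicate_mset (count U g) g + replicate_mset (count U h) h) c"
      using count_le[of c] assms(2) by auto
  qed
qed

lemma min_zero_sum_zero_subseq_eq:
  assumes "min_zero_sum p S" "U \<subseteq># S" "U \<noteq> {#}" "p dvd \<Sum>\<^sub># U"
  shows "U = S"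
proof (rule ccontr)
  assume "U \<noteq> S"
  with assms(2) have "size U < size S" by (simp add: mset_subset_size subset_mset.less_le)
  moreover have "1 \<le> size U" using assms(3) by (simp add: Suc_le_eq nonempty_has_size)
  moreover have "sigma p U = 0" using assms(4) by (simp add: sigma_def)
  ultimately show False using assms(1,2) unfolding min_zero_sum_def by blast
qed

lemma min_zero_sum_split:
  assumes min: "min_zero_sum p (add_mset h V)"
    and avoid: "\<And>U. U \<subseteq># V \<Longrightarrow> \<not> p dvd (\<Sum>\<^sub># U - c)"
    and grp: "y \<in> grp p" "z \<in> grp p"
    and y: "p dvd (y + c)" and yz: "p dvd (y + z - h)"
  shows "min_zero_sum p (V + {#y, z#})"
  unfolding min_zero_sum_def
proof (intro conjI allI impI)
  have sum: "p dvd (\<Sum>\<^sub># V + h)"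
    using min by (simp add: min_zero_sum_def sigma_def dvd_eq_mod_eq_0 add.commute)
  show "seq_over p (V + {#y, z#})"
    using min grp by (auto simp: min_zero_sum_def seq_over_def)
  show "V + {#y, z#} \<noteq> {#}" by simp
  have "\<Sum>\<^sub># (V + {#y, z#}) = (\<Sum>\<^sub># V + h) + (y + z - h)" by simp
  then show "sigma p (V + {#y, z#}) = 0"
    using dvd_add[OF sum yz] by (simp add: sigma_def dvd_eq_mod_eq_0 ac_simps)
  fix U assume U: "U \<subseteq># V + {#y, z#} \<and> 1 \<le> size U \<and> size U < size (V + {#y, z#})"
  show "sigma p U \<noteq> 0"
  proof
    assume "sigma p U = 0"
    then have zero: "p dvd \<Sum>\<^sub># U" by (simp add: sigma_def dvd_eq_mod_eq_0)
    obtain U1 R where UR: "U = U1 + R" "U1 \<subseteq># V" "R \<subseteq># {#y, z#}"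
      using U subseteq_mset_plus_split by blast
    from subseteq_mset_pair_cases[OF UR(3)] show False
    proof (elim disjE)
      assume "R = {#}"
      moreover have "U1 \<subseteq># add_mset h V"
        using UR(2) by (simp add: subset_mset.le_less_trans subset_mset.less_imp_le)
      ultimately have "U1 = add_mset h V"
        using U UR zero by (intro min_zero_sum_zero_subseq_eq[OF min]) auto
      then show False using size_mset_mono[OF UR(2)] by simp
    next
      assume "R = {#y#}"
      then have "\<Sum>\<^sub># U1 - c = \<Sum>\<^sub># U - (y + c)" using UR by simp
      then show False using avoid[OF UR(2)] dvd_diff[OF zero y] by metis
    next
      assume "R = {#z#}"
      then have "\<Sum>\<^sub># (V - U1) - c = (\<Sum>\<^sub># V + h) - \<Sum>\<^sub># U + (y + z - h) - (y + c)"
        using UR sum_mset_diff[OF UR(2)] by simp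
      then show False
        using avoid[OF diff_subset_eq_self] dvd_diff[OF dvd_add[OF dvd_diff[OF sum zero] yz] y]
        by metis
    next
      assume "R = {#y, z#}"
      then have "\<Sum>\<^sub># (add_mset h U1) = \<Sum>\<^sub># U - (y + z - h)" using UR by simp
      then have "p dvd \<Sum>\<^sub># (add_mset h U1)" using dvd_diff[OF zero yz] by (simp only:)
      then have "add_mset h U1 = add_mset h V"
        using UR(2) by (intro min_zero_sum_zero_subseq_eq[OF min]) auto
      then show False using U UR \<open>R = {#y, z#}\<close> by simp
    qed
  qed
qed

lemma unsplittable_subsums_cover:
  assumes "unsplittable p S" "h \<in># S"
  obtains U where "U \<subseteq># S - {#h#}" "p dvd (\<Sum>\<^sub># U - c)"
proof -
  have min: "min_zero_sum p S" using assms(1) unfolding unsplittable_def by blast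
  then have "h \<in> grp p" using assms(2) unfolding min_zero_sum_def seq_over_def by blast
  then have "0 < p" and h_mod: "h mod p = h" unfolding grp_def by auto
  define y where "y = (- c) mod p"
  define z where "z = (h - y) mod p"
  have yz_grp: "y \<in> grp p" "z \<in> grp p" using \<open>0 < p\<close> by (auto simp: grp_def y_def z_def)
  have yz: "(y + z) mod p = h" by (simp add: z_def mod_add_right_eq h_mod)
  have "p dvd (y + c)" by (simp add: y_def dvd_eq_mod_eq_0 mod_add_left_eq)
  moreover have "p dvd (y + z - h)" using yz h_mod by (metis mod_eq_dvd_iff)
  moreover have S: "S = add_mset h (S - {#h#})" using assms(2) by simp
  show thesis
  proof (rule ccontr)
    assume "\<not> thesis"
    with that have "\<not> p dvd (\<Sum>\<^sub># U - c)" if "U \<subseteq># S - {#h#}" for U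
      using \<open>U \<subseteq># S - {#h#}\<close> by blast
    then have "min_zero_sum p (S - {#h#} + {#y, z#})"
      using min S yz_grp \<open>p dvd (y + c)\<close> \<open>p dvd (y + z - h)\<close>
      by (intro min_zero_sum_split[where h = h and c = c]) simp_all
    then show False using assms yz_grp yz unfolding unsplittable_def by blast
  qed
qed

text \<open>The pair (a, b) stands for the subsequence g^a (xg)^b of T.\<close>

definition block_indices :: "nat \<Rightarrow> nat \<Rightarrow> (nat \<times> nat) set" where
  "block_indices k m =
     (\<lambda>a. (a, 0)) ` {1..k} \<union> (\<lambda>a. (a, 1)) ` {..k} \<union> (\<lambda>a. (a, 2)) ` {k - m..k}"

lemma mem_block_indices:
  "(a, b) \<in> block_indices k m \<longleftrightarrow>
     b = 0 \<and> 1 \<le> a \<and> a \<le> k \<or> b = 1 \<and> a \<le> k \<or> b = 2 \<and> k - m \<le> a \<and> a \<le> k"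
  by (auto simp: block_indices_def)

lemma card_block_indices:
  assumes "m \<le> k"
  shows "card (block_indices k m) = 2 * k + 2 + m"
proof -
  have "card (block_indices k m) = card {1..k} + card {..k} + card {k - m..k}"
    unfolding block_indices_def
    by (subst card_Un_disjoint; auto simp: card_image inj_on_def)+
  then show ?thesis using assms by simp
qed

lemma block_indices_residues_inj:
  fixes p x :: int
  assumes no_zero_sum: "\<And>a b. a \<le> k \<Longrightarrow> b \<le> 2 \<Longrightarrow> 0 < a + b \<Longrightarrow>
      p dvd (int a + int b * x) \<Longrightarrow> a = k \<and> b = 2"
    and "int k < x" "x < p"
    and gap: "\<And>e. 1 \<le> e \<Longrightarrow> e \<le> int m \<Longrightarrow> \<not> p dvd (2 * x - e)"
  shows "inj_on (\<lambda>(a, b). (int a + int b * x) mod p) (block_indices k m)"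
proof -
  have ordered: "a = a' \<and> b = b'"
    if ab: "(a, b) \<in> block_indices k m" "(a', b') \<in> block_indices k m" "b' \<le> b"
      and d: "p dvd ((int a + int b * x) - (int a' + int b' * x))" for a b a' b'
  proof -
    define e where "e = int a - int a'"
    have e_bounds: "- int k \<le> e" "e \<le> int k" using ab by (auto simp: e_def mem_block_indices)
    consider "b' = b" | "b = b' + 1" | "b = 2" "b' = 0" using ab by (auto simp: mem_block_indices)
    then show ?thesis
    proof cases
      case 1
      then have "p dvd e" using d by (simp add: e_def)
      then have "e = 0" using e_bounds \<open>int k < x\<close> \<open>x < p\<close> dvd_imp_le_int[of e p] by fastforce
      then show ?thesis using 1 by (simp add: e_def)
    next
      case 2
      then have "p dvd (e + x)" using d by (simp add: e_def algebra_simps)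
      show ?thesis
      proof (cases "0 \<le> e")
        case True
        then show ?thesis
          using no_zero_sum[of "nat e" 1] \<open>p dvd (e + x)\<close> e_bounds by (simp add: nat_le_iff)
      next
        case False
        then have "0 < e + x" "e + x < p" using e_bounds \<open>int k < x\<close> \<open>x < p\<close> by linarith+
        then show ?thesis using \<open>p dvd (e + x)\<close> zdvd_not_zless by blast
      qed
    next
      case 3
      then have "p dvd (e + 2 * x)" using d by (simp add: e_def algebra_simps)
      show ?thesis
      proof (cases "0 \<le> e")
        case True
        then have "nat e = k" using no_zero_sum[of "nat e" 2] \<open>p dvd (e + 2 * x)\<close> e_bounds by simp
        then show ?thesis using ab 3 True by (auto simp: e_def mem_block_indices)
      next
        case False
        then have "1 \<le> - e" "- e \<le> int m" using ab 3 by (auto simp: e_def mem_block_indices)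
        then show ?thesis using gap[of "- e"] \<open>p dvd (e + 2 * x)\<close> by (simp add: add.commute)
      qed
    qed
  qed
  show ?thesis
  proof (rule inj_onI, clarify)
    fix a b a' b'
    assume "(a, b) \<in> block_indices k m" "(a', b') \<in> block_indices k m"
      and "(int a + int b * x) mod p = (int a' + int b' * x) mod p"
    then show "a = a' \<and> b = b'"
      using ordered[of a b a' b'] ordered[of a' b' a b] nat_le_linear[of b b']
      by (auto simp: mod_eq_dvd_iff dvd_diff_commute)
  qed
qed

locale unsplittable_block =
  fixes p g x :: int and k :: nat and S T :: "int multiset"
  assumes prime: "prime p"
    and unsplittable: "unsplittable p S"
    and x_ge: "2 \<le> x" and x_le: "x \<le> p - 1"
    and k_ge: "3 \<le> k"
    and T_eq: "T = replicate_mset k g + replicate_mset 2 ((x * g) mod p)"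
    and T_subseq: "T \<subseteq># S"
begin

abbreviation X :: int where "X \<equiv> (x * g) mod p"

lemma sum_block_cong:
  "p dvd (\<Sum>\<^sub># (replicate_mset a g + replicate_mset b X) - (int a + int b * x) * g)"
proof -
  have "p dvd (X - x * g)" by (metis mod_eq_dvd_iff mod_mod_trivial)
  then have "p dvd (int b * (X - x * g))" by simp
  then show ?thesis by (simp add: algebra_simps)
qed

lemma S_eq: "S = replicate_mset k g + replicate_mset 2 X + (S - T)"
  using T_subseq T_eq by (metis subset_mset.add_diff_inverse)

lemma zero_subsum_covers_T:
  assumes "a \<le> k" "b \<le> 2" "0 < a + b" "R \<subseteq># S - T"
    and "p dvd ((int a + int b * x) * g + \<Sum>\<^sub># R)"
  shows "a = k \<and> b = 2"
proof -
  define U where "U = replicate_mset a g + replicate_mset b X + R"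
  have "U \<subseteq># S"
    unfolding U_def using assms(1,2,4)
    by (subst S_eq) (intro subset_mset.add_mono; simp add: replicate_mset_msubseteq_iff)
  moreover have "U \<noteq> {#}" using assms(3) by (auto simp: U_def)
  moreover have "p dvd \<Sum>\<^sub># U"
    using dvd_add[OF sum_block_cong[of a b] assms(5)] by (simp add: U_def algebra_simps)
  ultimately have "U = S"
    using unsplittable by (intro min_zero_sum_zero_subseq_eq) (auto simp: unsplittable_def)
  then have "size U = size S" by simp
  moreover have "size S = k + 2 + size (S - T)" using arg_cong[OF S_eq, of size] by simp
  moreover have "size U = a + b + size R" by (simp add: U_def)
  ultimately have "a + b + size R = k + 2 + size (S - T)" by linarith
  then show ?thesis using assms(1,2) size_mset_mono[OF assms(4)] by linarith
qed

lemma no_zero_combination: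
  assumes "a \<le> k" "b \<le> 2" "0 < a + b" "p dvd (int a + int b * x)"
  shows "a = k \<and> b = 2"
  using zero_subsum_covers_T[of a b "{#}"] assms by simp

lemma not_dvd_g: "\<not> p dvd g"
  using zero_subsum_covers_T[of 1 0 "{#}"] k_ge by auto

lemma X_ne_g: "X \<noteq> g"
proof
  assume "X = g"
  then have "(x * g) mod p = g mod p" by (metis mod_mod_trivial)
  then have "p dvd ((x - 1) * g)" by (simp add: mod_eq_dvd_iff algebra_simps)
  then have "p dvd (x - 1)" using prime not_dvd_g by (simp add: prime_dvd_mult_iff)
  then show False using zdvd_not_zless[of "x - 1" p] x_ge x_le by simp
qed

lemma subseq_decompose:
  assumes "U \<subseteq># replicate_mset i g + replicate_mset j X + (S - T)"
  obtains a b R where "a \<le> i" "b \<le> j" "R \<subseteq># S - T"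
    "p dvd (\<Sum>\<^sub># U - ((int a + int b * x) * g + \<Sum>\<^sub># R))"
proof -
  obtain U1 R where U: "U = U1 + R" "U1 \<subseteq># replicate_mset i g + replicate_mset j X" "R \<subseteq># S - T"
    using assms by (rule subseteq_mset_plus_split)
  obtain a b where "U1 = replicate_mset a g + replicate_mset b X" "a \<le> i" "b \<le> j"
    using U(2) X_ne_g[symmetric] by (rule subseteq_replicate_mset_plus_replicate_mset)
  with U sum_block_cong[of a b] show thesis by (intro that) (auto simp: algebra_simps)
qed

lemma k_less_x: "int k < x"
proof (rule ccontr)
  assume "\<not> int k < x"
  have "X \<in># S" using T_subseq by (rule mset_subset_eqD) (simp add: T_eq)
  then obtain U where U: "U \<subseteq># S - {#X#}" "p dvd (\<Sum>\<^sub># U - - g)"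
    by (rule unsplittable_subsums_cover[OF unsplittable])
  have "S - {#X#} = replicate_mset k g + replicate_mset 1 X + (S - T)"
    by (subst S_eq) (simp add: numeral_2_eq_2)
  then obtain a b R where ab: "a \<le> k" "b \<le> 1" "R \<subseteq># S - T"
      and decomp: "p dvd (\<Sum>\<^sub># U - ((int a + int b * x) * g + \<Sum>\<^sub># R))"
    using U(1) subseq_decompose by metis
  have zero: "p dvd ((int (a + 1) + int b * x) * g + \<Sum>\<^sub># R)"
    using dvd_diff[OF U(2) decomp] by (simp add: algebra_simps)
  show False
  proof (cases "a < k")
    case True
    then show False using zero_subsum_covers_T[of "a + 1" b R] zero ab by simp
  next
    case False
    \<comment> \<open>Then g^(k+1) (xg)^b R has sum 0, and so has g^(k+1-x) (xg)^(b+1) R.\<close>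
    define a' where "a' = nat (int k + 1 - x)"
    have a': "int a' = int k + 1 - x" using \<open>\<not> int k < x\<close> by (simp add: a'_def)
    have "a = k" using False ab by simp
    then have "int a' + int (b + 1) * x = int (a + 1) + int b * x"
      using a' by (simp add: algebra_simps)
    then have "p dvd ((int a' + int (b + 1) * x) * g + \<Sum>\<^sub># R)" using zero by (simp only:)
    moreover have "a' \<le> k" "a' \<noteq> k" using a' x_ge by linarith+
    ultimately show False using zero_subsum_covers_T[of a' "b + 1" R] ab by simp
  qed
qed

lemma not_dvd_2x_minus_1: "\<not> p dvd (2 * x - 1)"
proof
  assume "p dvd (2 * x - 1)"
  have "g \<in># S" using T_subseq by (rule mset_subset_eqD) (use k_ge in \<open>simp add: T_eq\<close>)
  then obtain U where U: "U \<subseteq># S - {#g#}" "p dvd (\<Sum>\<^sub># U - - (x * g))"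
    by (rule unsplittable_subsums_cover[OF unsplittable])
  have "S - {#g#} = replicate_mset (k - 1) g + replicate_mset 2 X + (S - T)"
    using k_ge by (subst S_eq) (cases k, simp_all)
  then obtain a b R where ab: "a \<le> k - 1" "b \<le> 2" "R \<subseteq># S - T"
      and decomp: "p dvd (\<Sum>\<^sub># U - ((int a + int b * x) * g + \<Sum>\<^sub># R))"
    using U(1) subseq_decompose by metis
  have zero: "p dvd ((int a + int (b + 1) * x) * g + \<Sum>\<^sub># R)"
    using dvd_diff[OF U(2) decomp] by (simp add: algebra_simps)
  show False
  proof (cases "b \<le> 1")
    case True
    with ab have "a \<le> k" "b + 1 \<le> 2" by simp_all
    then have "a = k" using zero_subsum_covers_T[OF _ _ _ ab(3) zero] by simp
    then show False using ab(1) k_ge by simp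
  next
    case False
    then have "b = 2" using ab by simp
    \<comment> \<open>Since 2x = 1 (mod p), g^a (xg)^3 R has the same sum as g^(a+1) (xg) R.\<close>
    have "p dvd ((int (a + 1) + int 1 * x) * g + \<Sum>\<^sub># R)"
      using dvd_diff[OF zero dvd_mult2[OF \<open>p dvd (2 * x - 1)\<close>, of g]] \<open>b = 2\<close>
      by (simp add: algebra_simps)
    moreover have "a + 1 \<le> k" using ab(1) k_ge by linarith
    ultimately show False using zero_subsum_covers_T[of "a + 1" 1 R] ab(3) by simp
  qed
qed

lemma not_dvd_2x_minus_2: "\<not> p dvd (2 * x - 2)"
proof
  assume "p dvd (2 * x - 2)"
  moreover have "2 * x - 2 = 2 * (x - 1)" by simp
  ultimately have "p dvd 2 * (x - 1)" by (simp only:)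
  then have "p dvd 2 \<or> p dvd (x - 1)" using prime_dvd_mult_iff[OF prime] by blast
  moreover have "0 < (2::int)" "2 < p" "0 < x - 1" "x - 1 < p" using x_ge x_le by linarith+
  ultimately show False using zdvd_not_zless by blast
qed

lemma dvd_2x_minus_3_imp_x_eq: "p dvd (2 * x - 3) \<Longrightarrow> x = (p + 3) div 2"
proof -
  assume "p dvd (2 * x - 3)"
  then obtain q where q: "2 * x - 3 = p * q" by (elim dvdE)
  have "0 < p" using x_ge x_le by linarith
  have "0 < p * q" "p * q < p * 2" using q x_ge x_le by linarith+
  then have "0 < q" "q < 2"
    using \<open>0 < p\<close> zero_less_mult_pos mult_less_cancel_left_pos by blast+
  then have "q = 1" by simp
  then show ?thesis using q by simp
qed

lemma sigma_block:
  "sigma p (replicate_mset a g + replicate_mset b X) = ((int a + int b * x) * g) mod p"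
  using sum_block_cong[of a b] by (simp add: sigma_def mod_eq_dvd_iff)

lemma card_Sigma_set_ge:
  assumes "m \<le> k" and gap: "\<And>e. 1 \<le> e \<Longrightarrow> e \<le> int m \<Longrightarrow> \<not> p dvd (2 * x - e)"
  shows "2 * k + 2 + m \<le> card (Sigma_set p T)"
proof -
  define f where "f = (\<lambda>(a, b). ((int a + int b * x) * g) mod p)"
  have "f ` block_indices k m \<subseteq> Sigma_set p T"
  proof clarify
    fix a b assume "(a, b) \<in> block_indices k m"
    then have "a \<le> k" "b \<le> 2" "0 < a + b" by (auto simp: mem_block_indices)
    then have "replicate_mset a g + replicate_mset b X \<subseteq># T"
        "replicate_mset a g + replicate_mset b X \<noteq> {#}"
      by (simp_all add: T_eq subset_mset.add_mono replicate_mset_msubseteq_iff)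
    moreover have "f (a, b) = sigma p (replicate_mset a g + replicate_mset b X)"
      by (simp add: f_def sigma_block)
    ultimately show "f (a, b) \<in> Sigma_set p T" unfolding Sigma_set_def by blast
  qed
  moreover have "finite (Sigma_set p T)"
    by (rule finite_subset[of _ "{0..<p}"])
      (auto simp: Sigma_set_def sigma_def prime_gt_0_int[OF prime])
  moreover have "inj_on f (block_indices k m)"
  proof (rule inj_onI, clarify)
    fix a b a' b'
    assume ab: "(a, b) \<in> block_indices k m" "(a', b') \<in> block_indices k m" "f (a, b) = f (a', b')"
    then have "p dvd (((int a + int b * x) - (int a' + int b' * x)) * g)"
      by (simp add: f_def mod_eq_dvd_iff left_diff_distrib)
    then have "(int a + int b * x) mod p = (int a' + int b' * x) mod p"
      using prime not_dvd_g by (simp add: prime_dvd_mult_iff mod_eq_dvd_iff)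
    then show "a = a' \<and> b = b'"
      using inj_onD[OF block_indices_residues_inj[OF no_zero_combination k_less_x _ gap] _ ab(1,2)]
        x_le by simp
  qed
  ultimately show ?thesis
    using card_block_indices[OF \<open>m \<le> k\<close>] card_inj_on_le by metis
qed

end

theorem lemma2p8:
  fixes p g x :: int and k :: nat and S T :: "int multiset"
  assumes "prime p"
    and "unsplittable p S"
    and "g \<in> grp p"
    and "2 \<le> x" and "x \<le> p - 1"
    and "3 \<le> k"
    and "T = replicate_mset k g + replicate_mset 2 ((x * g) mod p)"
    and "T \<subseteq># S"
  shows "card (Sigma_set p T) \<ge> 2 * size T \<and>
         (T \<noteq> replicate_mset k g + replicate_mset 2 ((((p + 3) div 2) * g) mod p)
           \<longrightarrow> card (Sigma_set p T) \<ge> 2 * size T + 1)"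
proof -
  interpret unsplittable_block p g x k S T
    using assms by unfold_locales
  define m :: nat where "m = (if p dvd (2 * x - 3) then 2 else 3)"
  have "2 * k + 2 + m \<le> card (Sigma_set p T)"
  proof (rule card_Sigma_set_ge)
    show "m \<le> k" using k_ge by (simp add: m_def)
    show "\<not> p dvd (2 * x - e)" if "1 \<le> e" "e \<le> int m" for e
    proof -
      have "e = 1 \<or> e = 2 \<or> e = 3 \<and> m = 3" using that by (auto simp: m_def split: if_splits)
      then show ?thesis using not_dvd_2x_minus_1 not_dvd_2x_minus_2 by (auto simp: m_def)
    qed
  qed
  then show ?thesis using dvd_2x_minus_3_imp_x_eq by (auto simp: T_eq m_def split: if_splits)
qed

end
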